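(* Let $\mathcal{H}$ be a separable, infinite dimensional, complex Hilbert space, let $T_{1},T_{3}\in\mathcal{B}(\mathcal{H})$ and let $T_{2},T_{4}$ be bounded operators on a (not necessarily separable) Hilbert space $\widetilde{\mathcal{H}}$. If $T_{1}\oplus T_{2}$ is unitarily equivalent to $T_{3}\oplus T_{4}$ (as operators on $\mathcal{H}\oplus\widetilde{\mathcal{H}}$), then there is a separable closed subspace $\mathcal{M}\subset\widetilde{\mathcal{H}}$ that is reducing for both $T_{2}$ and $T_{4}$ such that $T_{1}\oplus(T_{2}|_{\mathcal{M}})$ is unitarily equivalent to $T_{3}\oplus(T_{4}|_{\mathcal{M}})$.
   Context: A closed subspace is reducing for an operator $S$ if it is invariant under both $S$ and $S^{*}$. Two operators $A\in\mathcal{B}(\mathcal{K}_1)$, $B\in\mathcal{B}(\mathcal{K}_2)$ are unitarily equivalent if $B=WAW^{*}$ for some unitary $W:\mathcal{K}_1\to\mathcal{K}_2$. *)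

theory Defs
  imports Complex_Main "HOL-Library.Countable_Set" "HOL-Library.Product_Plus"
begin

text \<open>Complex inner product spaces (the library has only real ones).
  Inner product is linear in the second argument, conjugate-linear in the first.\<close>

class complex_inner = ab_group_add +
  fixes scaleC :: "complex \<Rightarrow> 'a \<Rightarrow> 'a" (infixr "*\<^sub>C" 75)
    and cinner :: "'a \<Rightarrow> 'a \<Rightarrow> complex"
  assumes scaleC_add_right: "a *\<^sub>C (x + y) = a *\<^sub>C x + a *\<^sub>C y"
    and scaleC_add_left: "(a + b) *\<^sub>C x = a *\<^sub>C x + b *\<^sub>C x"
    and scaleC_scaleC: "a *\<^sub>C (b *\<^sub>C x) = (a * b) *\<^sub>C x"
    and scaleC_one: "1 *\<^sub>C x = x"
    and cinner_commute: "cinner x y = cnj (cinner y x)"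
    and cinner_add_right: "cinner x (y + z) = cinner x y + cinner x z"
    and cinner_scaleC_right: "cinner x (a *\<^sub>C y) = a * cinner x y"
    and cinner_self_real: "Im (cinner x x) = 0"
    and cinner_self_nonneg: "0 \<le> Re (cinner x x)"
    and cinner_self_eq_zero: "cinner x x = 0 \<longleftrightarrow> x = 0"

definition cnorm :: "'a::complex_inner \<Rightarrow> real" where
  "cnorm x = sqrt (Re (cinner x x))"

class chilbert = complex_inner +
  assumes chilbert_complete:
    "(\<forall>e>0. \<exists>N. \<forall>m\<ge>N. \<forall>n\<ge>N. sqrt (Re (cinner (X m - X n) (X m - X n))) < e)
       \<Longrightarrow> \<exists>L. (\<lambda>n. sqrt (Re (cinner (X n - L) (X n - L)))) \<longlonglongrightarrow> 0"

text \<open>Orthogonal direct sum: the product type with the sum inner product.\<close>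
instantiation prod :: (complex_inner, complex_inner) complex_inner
begin
definition scaleC_prod_def: "a *\<^sub>C x = (a *\<^sub>C fst x, a *\<^sub>C snd x)"
definition cinner_prod_def: "cinner x y = cinner (fst x) (fst y) + cinner (snd x) (snd y)"
instance
proof
  fix x y z :: "'a \<times> 'b" and a b :: complex
  show "a *\<^sub>C (x + y) = a *\<^sub>C x + a *\<^sub>C y"
    by (simp add: scaleC_prod_def scaleC_add_right prod_eq_iff fst_add snd_add)
  show "(a + b) *\<^sub>C x = a *\<^sub>C x + b *\<^sub>C x"
    by (simp add: scaleC_prod_def scaleC_add_left prod_eq_iff fst_add snd_add)
  show "a *\<^sub>C (b *\<^sub>C x) = (a * b) *\<^sub>C x"
    by (simp add: scaleC_prod_def scaleC_scaleC)
  show "1 *\<^sub>C x = x"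
    by (simp add: scaleC_prod_def scaleC_one)
  show "cinner x y = cnj (cinner y x)"
    by (simp add: cinner_prod_def cinner_commute[of "fst x"] cinner_commute[of "snd x"])
  show "cinner x (y + z) = cinner x y + cinner x z"
    by (simp add: cinner_prod_def cinner_add_right)
  show "cinner x (a *\<^sub>C y) = a * cinner x y"
    by (simp add: cinner_prod_def scaleC_prod_def cinner_scaleC_right distrib_left)
  show "Im (cinner x x) = 0"
    by (simp add: cinner_prod_def cinner_self_real)
  show "0 \<le> Re (cinner x x)"
    by (simp add: cinner_prod_def cinner_self_nonneg add_nonneg_nonneg)
  show "cinner x x = 0 \<longleftrightarrow> x = 0"
  proof
    assume h: "cinner x x = 0"
    have "Re (cinner (fst x) (fst x)) + Re (cinner (snd x) (snd x)) = 0"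
      using arg_cong[OF h, of Re] by (simp add: cinner_prod_def)
    then have "Re (cinner (fst x) (fst x)) = 0" "Re (cinner (snd x) (snd x)) = 0"
      using cinner_self_nonneg[of "fst x"] cinner_self_nonneg[of "snd x"] by linarith+
    then have "cinner (fst x) (fst x) = 0" "cinner (snd x) (snd x) = 0"
      using cinner_self_real[of "fst x"] cinner_self_real[of "snd x"] complex_eq_iff by auto
    then show "x = 0" by (simp add: cinner_self_eq_zero prod_eq_iff)
  next
    assume "x = 0" then show "cinner x x = 0"
      using cinner_self_eq_zero[of "0::'a"] cinner_self_eq_zero[of "0::'b"]
      by (simp add: cinner_prod_def)
  qed
qed
end

definition dsum_op :: "('a \<Rightarrow> 'a) \<Rightarrow> ('b \<Rightarrow> 'b) \<Rightarrow> ('a \<times> 'b \<Rightarrow> 'a \<times> 'b)" where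
  "dsum_op A B = (\<lambda>(x, y). (A x, B y))"

definition clinear :: "('a::complex_inner \<Rightarrow> 'b::complex_inner) \<Rightarrow> bool" where
  "clinear T \<longleftrightarrow> (\<forall>x y. T (x + y) = T x + T y) \<and> (\<forall>a x. T (a *\<^sub>C x) = a *\<^sub>C T x)"

definition bounded_op :: "('a::complex_inner \<Rightarrow> 'a) \<Rightarrow> bool" where
  "bounded_op T \<longleftrightarrow> clinear T \<and> (\<exists>K. \<forall>x. cnorm (T x) \<le> K * cnorm x)"

text \<open>Hilbert space adjoint (exists and is unique for bounded operators on a Hilbert space).\<close>
definition adjoint :: "('a::complex_inner \<Rightarrow> 'a) \<Rightarrow> ('a \<Rightarrow> 'a)" where
  "adjoint T = (SOME S. \<forall>x y. cinner (T x) y = cinner x (S y))"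

definition csubspace :: "'a::complex_inner set \<Rightarrow> bool" where
  "csubspace M \<longleftrightarrow> 0 \<in> M \<and> (\<forall>x\<in>M. \<forall>y\<in>M. x + y \<in> M) \<and> (\<forall>a. \<forall>x\<in>M. a *\<^sub>C x \<in> M)"

definition cclosed :: "'a::complex_inner set \<Rightarrow> bool" where
  "cclosed M \<longleftrightarrow> (\<forall>X L. (\<forall>n. X n \<in> M) \<and> (\<lambda>n. cnorm (X n - L)) \<longlonglongrightarrow> 0 \<longrightarrow> L \<in> M)"

definition closed_csubspace :: "'a::complex_inner set \<Rightarrow> bool" where
  "closed_csubspace M \<longleftrightarrow> csubspace M \<and> cclosed M"

definition cseparable :: "'a::complex_inner set \<Rightarrow> bool" where
  "cseparable M \<longleftrightarrow> (\<exists>D. countable D \<and> D \<subseteq> M \<and>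
      (\<forall>x\<in>M. \<forall>e>0. \<exists>d\<in>D. cnorm (x - d) < e))"

definition cspan :: "'a::complex_inner set \<Rightarrow> 'a set" where
  "cspan B = {(\<Sum>b\<in>F. c b *\<^sub>C b) | F c. finite F \<and> F \<subseteq> B}"

definition infinite_dimensional :: "'a::complex_inner itself \<Rightarrow> bool" where
  "infinite_dimensional _ \<longleftrightarrow> \<not> (\<exists>B::'a set. finite B \<and> cspan B = UNIV)"

definition reducing :: "'a::complex_inner set \<Rightarrow> ('a \<Rightarrow> 'a) \<Rightarrow> bool" where
  "reducing M T \<longleftrightarrow> closed_csubspace M \<and> T ` M \<subseteq> M \<and> adjoint T ` M \<subseteq> M"

definition unitarily_equiv_on ::
  "'a::complex_inner set \<Rightarrow> ('a \<Rightarrow> 'a) \<Rightarrow> 'b::complex_inner set \<Rightarrow> ('b \<Rightarrow> 'b) \<Rightarrow> bool" where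
  "unitarily_equiv_on S A S' B \<longleftrightarrow>
     (\<exists>W. bij_betw W S S'
        \<and> (\<forall>x\<in>S. \<forall>y\<in>S. W (x + y) = W x + W y)
        \<and> (\<forall>a. \<forall>x\<in>S. W (a *\<^sub>C x) = a *\<^sub>C W x)
        \<and> (\<forall>x\<in>S. \<forall>y\<in>S. cinner (W x) (W y) = cinner x y)
        \<and> (\<forall>x\<in>S. B (W x) = W (A x)))"

end

theory Submission
  imports Defs
begin

text \<open>Let \<open>W\<close> implement the unitary equivalence. Starting from a countable dense subset of
  \<open>\<H> \<oplus> 0\<close>, close it under \<open>T\<^sub>1 \<oplus> T\<^sub>2\<close>, \<open>T\<^sub>3 \<oplus> T\<^sub>4\<close>, \<open>T\<^sub>1\<^sup>* \<oplus> T\<^sub>2\<^sup>*\<close>, \<open>T\<^sub>3\<^sup>* \<oplus> T\<^sub>4\<^sup>*\<close>, \<open>W\<close>, \<open>W\<^sup>-\<^sup>1\<close>, addition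
  and multiplication by Gaussian rationals: the result is still countable, and its norm closure
  \<open>N\<close> is a separable closed subspace invariant under all these Lipschitz maps. As \<open>N\<close> contains
  \<open>\<H> \<oplus> 0\<close>, it has the form \<open>\<H> \<oplus> \<M>\<close>; then \<open>\<M>\<close> is separable and reduces \<open>T\<^sub>2\<close> and \<open>T\<^sub>4\<close>, and
  \<open>W\<close> restricts to a unitary of \<open>N\<close> intertwining the two direct sums. Since adjoints are defined by choice, their existence and boundedness
  come from the Riesz representation theorem, proved via closest points in closed subspaces.\<close>

context complex_inner
begin

lemma scaleC_zero_left [simp]: "0 *\<^sub>C x = 0"
  using scaleC_add_left[of 0 0 x] by simp

lemma scaleC_zero_right [simp]: "a *\<^sub>C 0 = 0"
  using scaleC_add_right[of a 0 0] by simp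

lemma scaleC_minus_left: "(- a) *\<^sub>C x = - (a *\<^sub>C x)"
  using scaleC_add_left[of a "- a" x] by (simp add: eq_neg_iff_add_eq_0 add.commute)

lemma scaleC_minus_right: "a *\<^sub>C (- x) = - (a *\<^sub>C x)"
  using scaleC_add_right[of a x "- x"] by (simp add: eq_neg_iff_add_eq_0 add.commute)

lemma scaleC_diff_left: "(a - b) *\<^sub>C x = a *\<^sub>C x - b *\<^sub>C x"
  using scaleC_add_left[of a "- b" x] by (simp add: scaleC_minus_left)

lemma scaleC_diff_right: "a *\<^sub>C (x - y) = a *\<^sub>C x - a *\<^sub>C y"
  using scaleC_add_right[of a x "- y"] by (simp add: scaleC_minus_right)

end

lemma cinner_zero_right [simp]: "cinner x (0::'a::complex_inner) = 0"
  using cinner_scaleC_right[of x 0 0] by simp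

lemma cinner_zero_left [simp]: "cinner (0::'a::complex_inner) x = 0"
  by (metis cinner_commute cinner_zero_right complex_cnj_zero)

lemma cinner_add_left: "cinner (x + y) (z::'a::complex_inner) = cinner x z + cinner y z"
  by (metis cinner_add_right cinner_commute complex_cnj_add)

lemma cinner_scaleC_left: "cinner (a *\<^sub>C x) (y::'a::complex_inner) = cnj a * cinner x y"
  by (metis cinner_commute cinner_scaleC_right complex_cnj_mult)

lemma cinner_diff_right: "cinner x (y - z::'a::complex_inner) = cinner x y - cinner x z"
  using cinner_add_right[of x "y - z" z] by simp

lemma cinner_diff_left: "cinner (x - y) (z::'a::complex_inner) = cinner x z - cinner y z"
  using cinner_add_left[of "x - y" y z] by simp

lemma cinner_self_eq_Re: "cinner (x::'a::complex_inner) x = complex_of_real (Re (cinner x x))"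
  using cinner_self_real[of x] by (simp add: complex_eq_iff)

lemma cinner_ext: "(\<And>x. cinner x u = cinner x v) \<Longrightarrow> u = (v::'a::complex_inner)"
  by (metis cinner_diff_right cinner_self_eq_zero eq_iff_diff_eq_0)

lemma cnorm_nonneg: "0 \<le> cnorm x"
  by (simp add: cnorm_def cinner_self_nonneg)

lemma cnorm_power2: "(cnorm x)\<^sup>2 = Re (cinner x x)"
  unfolding cnorm_def by (rule real_sqrt_pow2[OF cinner_self_nonneg])

lemma cnorm_zero [simp]: "cnorm 0 = 0"
  by (simp add: cnorm_def)

lemma cnorm_le_iff_power2_le: "cnorm x \<le> cnorm y \<longleftrightarrow> (cnorm x)\<^sup>2 \<le> (cnorm y)\<^sup>2"
  by (simp add: cnorm_nonneg power2_le_iff_abs_le)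

lemma cinner_self_pos: "y \<noteq> 0 \<Longrightarrow> 0 < Re (cinner y (y::'a::complex_inner))"
  using cinner_self_nonneg[of y] cinner_self_eq_zero[of y] cinner_self_eq_Re[of y]
  by (metis less_eq_real_def of_real_0)

lemma cinner_self_diff_projection:
  fixes x y :: "'a::complex_inner"
  assumes "y \<noteq> 0"
  defines "t \<equiv> cinner y x / complex_of_real (Re (cinner y y))"
  shows "Re (cinner (x - t *\<^sub>C y) (x - t *\<^sub>C y))
           = Re (cinner x x) - (cmod (cinner x y))\<^sup>2 / Re (cinner y y)"
proof -
  define r where "r = Re (cinner y y)"
  define b where "b = cinner x y"
  have "r \<noteq> 0"
    using cinner_self_pos[OF assms(1)] by (simp add: r_def)
  have yx: "cinner y x = cnj b"
    by (simp add: b_def cinner_commute[of y x])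
  have b_cnj: "b * cnj b = complex_of_real ((cmod b)\<^sup>2)"
    by (simp add: complex_norm_square flip: of_real_power)
  have "cinner (x - t *\<^sub>C y) (x - t *\<^sub>C y)
          = cinner x x - t * b - cnj t * cnj b + cnj t * t * complex_of_real r"
    using cinner_self_eq_Re[of y]
    by (simp add: cinner_diff_left cinner_diff_right cinner_scaleC_left cinner_scaleC_right
        yx b_def r_def algebra_simps)
  also have "\<dots> = cinner x x - complex_of_real ((cmod b)\<^sup>2 / r)"
    using \<open>r \<noteq> 0\<close> b_cnj by (simp add: t_def yx r_def[symmetric] field_simps)
  finally show ?thesis
    by (simp add: b_def r_def)
qed

lemma cauchy_schwarz_power2:
  fixes x y :: "'a::complex_inner"
  shows "(cmod (cinner x y))\<^sup>2 \<le> Re (cinner x x) * Re (cinner y y)"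
proof (cases "y = 0")
  case False
  define p where "p = x - (cinner y x / complex_of_real (Re (cinner y y))) *\<^sub>C y"
  have "(cmod (cinner x y))\<^sup>2 + Re (cinner y y) * Re (cinner p p)
               = Re (cinner x x) * Re (cinner y y)"
    using cinner_self_diff_projection[OF False, of x] cinner_self_pos[OF False]
    by (simp add: p_def field_simps)
  moreover have "0 \<le> Re (cinner y y) * Re (cinner p p)"
    by (simp add: cinner_self_nonneg)
  ultimately show ?thesis
    by linarith
qed simp

lemma cauchy_schwarz: "cmod (cinner x y) \<le> cnorm x * cnorm y"
  using cauchy_schwarz_power2[of x y]
  by (metis cnorm_nonneg cnorm_power2 mult_nonneg_nonneg power2_le_imp_le power_mult_distrib)

lemma cnorm_triangle: "cnorm (x + y) \<le> cnorm x + cnorm y"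
proof -
  have "Re (cinner y x) = Re (cinner x y)"
    by (metis cinner_commute complex_cnj_cancel_iff cnj.sel(1))
  moreover have "Re (cinner x y) \<le> cnorm x * cnorm y"
    using cauchy_schwarz[of x y] complex_Re_le_cmod[of "cinner x y"] by linarith
  ultimately have "(cnorm (x + y))\<^sup>2 \<le> (cnorm x + cnorm y)\<^sup>2"
    by (simp add: cnorm_power2 cinner_add_left cinner_add_right power2_sum)
  then show ?thesis
    using cnorm_nonneg[of x] cnorm_nonneg[of y] by (meson add_nonneg_nonneg power2_le_imp_le)
qed

lemma cnorm_triangle_diff: "cnorm (x - z) \<le> cnorm (x - y) + cnorm (y - z)"
  using cnorm_triangle[of "x - y" "y - z"] by simp

lemma cnorm_scaleC: "cnorm (a *\<^sub>C x) = cmod a * cnorm x"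
proof -
  have "Re (cinner (a *\<^sub>C x) (a *\<^sub>C x)) = (cmod a)\<^sup>2 * Re (cinner x x)"
    using cinner_self_eq_Re[of x]
    by (simp add: cinner_scaleC_left cinner_scaleC_right mult.assoc[symmetric]
        complex_norm_square[symmetric])
  then show ?thesis
    by (simp add: cnorm_def real_sqrt_mult)
qed

lemma cnorm_minus_commute: "cnorm (x - y) = cnorm (y - x)"
  using cnorm_scaleC[of "-1" "x - y"] by (simp add: scaleC_minus_left scaleC_one)

lemma parallelogram_law:
  "(cnorm (x + y))\<^sup>2 + (cnorm (x - y))\<^sup>2 = 2 * (cnorm x)\<^sup>2 + 2 * (cnorm y)\<^sup>2"
  by (simp add: cnorm_power2 cinner_add_left cinner_add_right cinner_diff_left cinner_diff_right)

lemma apollonius: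
  "(cnorm (y - z))\<^sup>2
     = 2 * (cnorm (x - y))\<^sup>2 + 2 * (cnorm (x - z))\<^sup>2 - 4 * (cnorm (x - (1/2) *\<^sub>C (y + z)))\<^sup>2"
proof -
  have two: "(2::complex) *\<^sub>C w = w + w" for w :: 'a
    by (metis one_add_one scaleC_add_left scaleC_one)
  have "(x - y) + (x - z) = 2 *\<^sub>C (x - (1/2) *\<^sub>C (y + z))"
    by (simp add: scaleC_diff_right scaleC_scaleC scaleC_one two)
  then have "cnorm ((x - y) + (x - z)) = 2 * cnorm (x - (1/2) *\<^sub>C (y + z))"
    by (simp add: cnorm_scaleC)
  moreover have "cnorm ((x - y) - (x - z)) = cnorm (y - z)"
    by (simp add: cnorm_minus_commute)
  ultimately show ?thesis
    using parallelogram_law[of "x - y" "x - z"] by (simp add: power_mult_distrib)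
qed

lemma Cauchy_cnorm_convergent:
  fixes X :: "nat \<Rightarrow> 'a::chilbert"
  assumes "\<forall>e>0. \<exists>N. \<forall>m\<ge>N. \<forall>n\<ge>N. cnorm (X m - X n) < e"
  shows "\<exists>L. (\<lambda>n. cnorm (X n - L)) \<longlonglongrightarrow> 0"
  using chilbert_complete[of X] assms unfolding cnorm_def by blast

lemma Cauchy_if_cnorm_power2_le:
  assumes "\<And>m n. (cnorm (X m - X n))\<^sup>2 \<le> 2 * inverse (Suc m) + 2 * inverse (Suc n)"
  shows "\<forall>e>0. \<exists>N. \<forall>m\<ge>N. \<forall>n\<ge>N. cnorm (X m - X n) < e"
proof (intro allI impI)
  fix e :: real
  assume "0 < e"
  then obtain N where N: "inverse (real (Suc N)) < e\<^sup>2 / 4"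
    using reals_Archimedean[of "e\<^sup>2 / 4"] by auto
  have "cnorm (X m - X n) < e" if "N \<le> m" "N \<le> n" for m n
  proof -
    have "inverse (real (Suc m)) \<le> inverse (Suc N)" "inverse (real (Suc n)) \<le> inverse (Suc N)"
      using that by (simp_all add: le_imp_inverse_le)
    then have "(cnorm (X m - X n))\<^sup>2 < e\<^sup>2"
      using assms[of m n] N by linarith
    then show ?thesis
      using \<open>0 < e\<close> by (simp add: power2_less_imp_less)
  qed
  then show "\<exists>N. \<forall>m\<ge>N. \<forall>n\<ge>N. cnorm (X m - X n) < e"
    by blast
qed

lemma cnorm_le_if_approximating_sequence:
  assumes L: "(\<lambda>n. cnorm (k n - L)) \<longlonglongrightarrow> 0"
    and k_close: "\<And>n. (cnorm (x - k n))\<^sup>2 < \<delta>\<^sup>2 + inverse (Suc n)" and "0 \<le> \<delta>"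
  shows "cnorm (x - L) \<le> \<delta>"
proof -
  have "cnorm (x - L) \<le> sqrt (\<delta>\<^sup>2 + inverse (Suc n)) + cnorm (k n - L)" for n
  proof -
    have "cnorm (x - k n) \<le> sqrt (\<delta>\<^sup>2 + inverse (Suc n))"
      using k_close[of n] by (simp add: real_le_rsqrt less_imp_le)
    then show ?thesis
      using cnorm_triangle_diff[of x L "k n"] by linarith
  qed
  moreover have "(\<lambda>n. sqrt (\<delta>\<^sup>2 + inverse (Suc n)) + cnorm (k n - L)) \<longlonglongrightarrow> sqrt (\<delta>\<^sup>2 + 0) + 0"
    by (intro tendsto_intros L LIMSEQ_inverse_real_of_nat)
  ultimately show ?thesis
    using \<open>0 \<le> \<delta>\<close> by (intro LIMSEQ_le_const) auto
qed

lemma power2_Inf_approximating_sequence: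
  fixes g :: "'a \<Rightarrow> real"
  assumes "S \<noteq> {}" "\<And>s. s \<in> S \<Longrightarrow> 0 \<le> g s"
  shows "\<exists>k. \<forall>n. k n \<in> S \<and> (g (k n))\<^sup>2 < (Inf (g ` S))\<^sup>2 + inverse (Suc n)"
proof -
  have "0 \<le> Inf (g ` S)"
    using assms by (intro cInf_greatest) auto
  have "\<exists>s\<in>S. (g s)\<^sup>2 < (Inf (g ` S))\<^sup>2 + inverse (Suc n)" for n
  proof -
    have "g ` S \<noteq> {}"
      using assms(1) by simp
    moreover have "Inf (g ` S) < sqrt ((Inf (g ` S))\<^sup>2 + inverse (Suc n))"
      using \<open>0 \<le> Inf (g ` S)\<close> by (simp add: real_less_rsqrt)
    ultimately obtain t where "t \<in> g ` S" "t < sqrt ((Inf (g ` S))\<^sup>2 + inverse (Suc n))"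
      by (meson cInf_lessD)
    then obtain s where "s \<in> S" "g s < sqrt ((Inf (g ` S))\<^sup>2 + inverse (Suc n))"
      by blast
    moreover have "g s = sqrt ((g s)\<^sup>2)"
      using assms(2)[OF \<open>s \<in> S\<close>] by simp
    ultimately show ?thesis
      by (metis real_sqrt_less_iff)
  qed
  then show ?thesis
    by metis
qed

lemma closest_point_exists:
  fixes K :: "'a::chilbert set"
  assumes "closed_csubspace K"
  shows "\<exists>L\<in>K. \<forall>k\<in>K. cnorm (x - L) \<le> cnorm (x - k)"
proof -
  have "0 \<in> K" and K_midpoint: "\<And>u v. u \<in> K \<Longrightarrow> v \<in> K \<Longrightarrow> (1/2) *\<^sub>C (u + v) \<in> K"
    using assms by (auto simp: closed_csubspace_def csubspace_def)
  define \<delta> where "\<delta> = Inf ((\<lambda>k. cnorm (x - k)) ` K)"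
  have \<delta>_le: "\<delta> \<le> cnorm (x - k)" if "k \<in> K" for k
    unfolding \<delta>_def using that by (intro cInf_lower) (auto intro!: bdd_belowI[where m = 0] simp: cnorm_nonneg)
  have "0 \<le> \<delta>"
    unfolding \<delta>_def using \<open>0 \<in> K\<close> by (intro cInf_greatest) (auto simp: cnorm_nonneg)
  have "K \<noteq> {}"
    using \<open>0 \<in> K\<close> by blast
  then obtain k where k_in: "\<And>n. k n \<in> K"
    and k_close: "\<And>n. (cnorm (x - k n))\<^sup>2 < \<delta>\<^sup>2 + inverse (Suc n)"
    using power2_Inf_approximating_sequence[of K "\<lambda>k. cnorm (x - k)"]
    unfolding \<delta>_def by (metis cnorm_nonneg)
  have "(cnorm (k m - k n))\<^sup>2 \<le> 2 * inverse (Suc m) + 2 * inverse (Suc n)" for m n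
  proof -
    have "\<delta>\<^sup>2 \<le> (cnorm (x - (1/2) *\<^sub>C (k m + k n)))\<^sup>2"
      using \<delta>_le[OF K_midpoint[OF k_in k_in]] \<open>0 \<le> \<delta>\<close> by (simp add: power_mono)
    then show ?thesis
      using apollonius[of "k m" "k n" x] k_close[of m] k_close[of n] by linarith
  qed
  then have "\<forall>e>0. \<exists>N. \<forall>m\<ge>N. \<forall>n\<ge>N. cnorm (k m - k n) < e"
    by (rule Cauchy_if_cnorm_power2_le)
  then obtain L where L: "(\<lambda>n. cnorm (k n - L)) \<longlonglongrightarrow> 0"
    using Cauchy_cnorm_convergent by blast
  have "L \<in> K"
    using assms k_in L by (auto simp: closed_csubspace_def cclosed_def)
  have "cnorm (x - L) \<le> \<delta>"
    using L k_close \<open>0 \<le> \<delta>\<close> by (rule cnorm_le_if_approximating_sequence)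
  then show ?thesis
    using \<open>L \<in> K\<close> \<delta>_le by force
qed

lemma orthogonal_if_minimal_norm:
  fixes y z :: "'a::complex_inner"
  assumes "\<And>t. cnorm z \<le> cnorm (z - t *\<^sub>C y)"
  shows "cinner y z = 0"
proof (cases "y = 0")
  case False
  define t where "t = cinner y z / complex_of_real (Re (cinner y y))"
  have "Re (cinner z z) \<le> Re (cinner z z) - (cmod (cinner z y))\<^sup>2 / Re (cinner y y)"
    using assms[of t] cinner_self_diff_projection[OF False, of z]
    by (simp add: t_def cnorm_le_iff_power2_le cnorm_power2)
  then have "cinner z y = 0"
    using cinner_self_pos[OF False] by (simp add: divide_le_0_iff)
  then show ?thesis
    by (metis cinner_commute complex_cnj_zero)
qed simp

lemma closed_csubspace_kernel:
  fixes f :: "'a::complex_inner \<Rightarrow> complex"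
  assumes add: "\<And>x y. f (x + y) = f x + f y" and scale: "\<And>a x. f (a *\<^sub>C x) = a * f x"
    and bound: "\<And>x. cmod (f x) \<le> C * cnorm x"
  shows "closed_csubspace {x. f x = 0}"
proof -
  have "f 0 = 0"
    using scale[of 0 0] by simp
  moreover have "L \<in> {x. f x = 0}"
    if X: "\<forall>n. X n \<in> {x. f x = 0}" and lim: "(\<lambda>n. cnorm (X n - L)) \<longlonglongrightarrow> 0" for X L
  proof -
    have "cmod (f L) \<le> C * cnorm (X n - L)" for n
    proof -
      have "f (X n - L) = - f L"
        using X add[of "X n - L" L] by (simp add: eq_neg_iff_add_eq_0)
      then show ?thesis
        using bound[of "X n - L"] by simp
    qed
    moreover have "(\<lambda>n. C * cnorm (X n - L)) \<longlonglongrightarrow> 0"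
      using tendsto_mult_right_zero[OF lim] by simp
    ultimately have "cmod (f L) \<le> 0"
      by (intro LIMSEQ_le_const) auto
    then show ?thesis
      by simp
  qed
  ultimately show ?thesis
    by (auto simp: closed_csubspace_def csubspace_def cclosed_def add scale)
qed

lemma functional_eq_cinner_if_orthogonal_kernel:
  fixes f :: "'a::complex_inner \<Rightarrow> complex"
  assumes add: "\<And>x y. f (x + y) = f x + f y" and scale: "\<And>a x. f (a *\<^sub>C x) = a * f x"
    and "f z \<noteq> 0" and orthogonal: "\<And>y. f y = 0 \<Longrightarrow> cinner z y = 0"
  shows "f x = cinner (cnj (f z / cinner z z) *\<^sub>C z) x"
proof -
  have "cinner z z \<noteq> 0"
    using \<open>f z \<noteq> 0\<close> scale[of 0 0] by (auto simp: cinner_self_eq_zero)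
  have "f (x - (f x / f z) *\<^sub>C z) = 0"
    using \<open>f z \<noteq> 0\<close> add[of "x - (f x / f z) *\<^sub>C z" "(f x / f z) *\<^sub>C z"] by (simp add: scale)
  then have "cinner z (x - (f x / f z) *\<^sub>C z) = 0"
    by (rule orthogonal)
  then have "cinner z x = (f x / f z) * cinner z z"
    by (simp add: cinner_diff_right cinner_scaleC_right)
  then show ?thesis
    using \<open>cinner z z \<noteq> 0\<close> \<open>f z \<noteq> 0\<close> by (simp add: cinner_scaleC_left field_simps)
qed

lemma riesz_representation:
  fixes f :: "'a::chilbert \<Rightarrow> complex"
  assumes add: "\<And>x y. f (x + y) = f x + f y" and scale: "\<And>a x. f (a *\<^sub>C x) = a * f x"
    and bound: "\<And>x. cmod (f x) \<le> C * cnorm x"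
  shows "\<exists>z. \<forall>x. f x = cinner z x"
proof (cases "\<forall>x. f x = 0")
  case False
  then obtain x0 where "f x0 \<noteq> 0"
    by blast
  obtain L where "f L = 0" and L_closest: "\<And>k. f k = 0 \<Longrightarrow> cnorm (x0 - L) \<le> cnorm (x0 - k)"
    using closest_point_exists[OF closed_csubspace_kernel[OF add scale bound], of x0] by auto
  define z where "z = x0 - L"
  have "f z \<noteq> 0"
    using \<open>f L = 0\<close> \<open>f x0 \<noteq> 0\<close> add[of z L] by (simp add: z_def)
  have "cinner z y = 0" if "f y = 0" for y
  proof -
    have "cinner y z = 0"
    proof (rule orthogonal_if_minimal_norm)
      fix t
      have "f (L + t *\<^sub>C y) = 0"
        using \<open>f L = 0\<close> that by (simp add: add scale)
      then have "cnorm (x0 - L) \<le> cnorm (x0 - (L + t *\<^sub>C y))"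
        by (rule L_closest)
      then show "cnorm z \<le> cnorm (z - t *\<^sub>C y)"
        by (metis z_def diff_diff_eq)
    qed
    then show ?thesis
      by (metis cinner_commute complex_cnj_zero)
  qed
  then show ?thesis
    using functional_eq_cinner_if_orthogonal_kernel[OF add scale \<open>f z \<noteq> 0\<close>] by blast
qed (intro exI[of _ 0]; simp)

lemma clinear_diff: "clinear T \<Longrightarrow> T (x - y) = T x - T y"
  unfolding clinear_def by (metis diff_add_cancel eq_diff_eq)

lemma bounded_op_pos_bound:
  assumes "bounded_op T"
  obtains K where "0 < K" "\<And>x. cnorm (T x) \<le> K * cnorm x"
proof -
  obtain K where K: "\<And>x. cnorm (T x) \<le> K * cnorm x"
    using assms by (auto simp: bounded_op_def)
  have "cnorm (T x) \<le> max K 1 * cnorm x" for x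
    using K[of x] cnorm_nonneg[of x] by (meson max.cobounded1 mult_right_mono order_trans)
  then show thesis
    using that[of "max K 1"] by simp
qed

definition clipschitz :: "('a::complex_inner \<Rightarrow> 'b::complex_inner) \<Rightarrow> bool" where
  "clipschitz f \<longleftrightarrow> (\<exists>K>0. \<forall>x y. cnorm (f x - f y) \<le> K * cnorm (x - y))"

lemma clipschitzI: "0 < K \<Longrightarrow> (\<And>x y. cnorm (f x - f y) \<le> K * cnorm (x - y)) \<Longrightarrow> clipschitz f"
  unfolding clipschitz_def by blast

lemma clipschitz_bounded_op:
  assumes "bounded_op T"
  shows "clipschitz T"
proof -
  obtain K where "0 < K" and K: "\<And>x. cnorm (T x) \<le> K * cnorm x"
    using bounded_op_pos_bound[OF assms] by blast
  have "T x - T y = T (x - y)" for x y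
    using assms by (simp add: bounded_op_def clinear_diff)
  with \<open>0 < K\<close> K show ?thesis
    by (intro clipschitzI[of K]) simp_all
qed

lemma adjoint_eq:
  fixes T :: "'a::chilbert \<Rightarrow> 'a"
  assumes "bounded_op T"
  shows "cinner (T x) y = cinner x (adjoint T y)"
proof -
  obtain K where K: "\<And>x. cnorm (T x) \<le> K * cnorm x"
    using bounded_op_pos_bound[OF assms] by blast
  have lin: "clinear T"
    using assms by (simp add: bounded_op_def)
  have "\<exists>z. \<forall>x. cinner y (T x) = cinner z x" for y
  proof (rule riesz_representation)
    show "cinner y (T (u + v)) = cinner y (T u) + cinner y (T v)" for u v
      using lin by (simp add: clinear_def cinner_add_right)
    show "cinner y (T (a *\<^sub>C u)) = a * cinner y (T u)" for a u
      using lin by (simp add: clinear_def cinner_scaleC_right)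
    show "cmod (cinner y (T u)) \<le> (cnorm y * K) * cnorm u" for u
      using cauchy_schwarz[of y "T u"] mult_left_mono[OF K[of u] cnorm_nonneg[of y]]
      by (simp add: mult.assoc)
  qed
  then have "\<exists>S. \<forall>x y. cinner (T x) y = cinner x (S y)"
    by (metis cinner_commute)
  from someI_ex[OF this] show ?thesis
    unfolding adjoint_def by blast
qed

lemma bounded_op_adjoint:
  fixes T :: "'a::chilbert \<Rightarrow> 'a"
  assumes "bounded_op T"
  shows "bounded_op (adjoint T)"
proof -
  obtain K where "0 < K" and K: "\<And>x. cnorm (T x) \<le> K * cnorm x"
    using bounded_op_pos_bound[OF assms] by blast
  note adj = adjoint_eq[OF assms]
  have "adjoint T (u + v) = adjoint T u + adjoint T v" for u v
    by (rule cinner_ext) (simp add: adj[symmetric] cinner_add_right)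
  moreover have "adjoint T (a *\<^sub>C u) = a *\<^sub>C adjoint T u" for a u
    by (rule cinner_ext) (simp add: adj[symmetric] cinner_scaleC_right)
  ultimately have "clinear (adjoint T)"
    unfolding clinear_def by blast
  moreover have "cnorm (adjoint T y) \<le> K * cnorm y" for y
  proof -
    have "(cnorm (adjoint T y))\<^sup>2 = Re (cinner (T (adjoint T y)) y)"
      by (simp add: cnorm_power2 adj)
    also have "\<dots> \<le> cnorm (T (adjoint T y)) * cnorm y"
      by (rule order_trans[OF complex_Re_le_cmod cauchy_schwarz])
    also have "\<dots> \<le> K * cnorm (adjoint T y) * cnorm y"
      using K cnorm_nonneg by (rule mult_right_mono)
    finally have "cnorm (adjoint T y) * cnorm (adjoint T y) \<le> cnorm (adjoint T y) * (K * cnorm y)"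
      by (simp add: power2_eq_square algebra_simps)
    then show ?thesis
      using cnorm_nonneg[of "adjoint T y"] \<open>0 < K\<close> cnorm_nonneg[of y]
      by (cases "cnorm (adjoint T y) = 0") auto
  qed
  ultimately show ?thesis
    unfolding bounded_op_def by blast
qed

lemma cinner_Pair [simp]: "cinner (a, b) (c, d) = cinner a c + cinner b d"
  by (simp add: cinner_prod_def)

lemma scaleC_Pair [simp]: "r *\<^sub>C (a, b) = (r *\<^sub>C a, r *\<^sub>C b)"
  by (simp add: scaleC_prod_def)

lemma cnorm_Pair_power2: "(cnorm (a, b))\<^sup>2 = (cnorm a)\<^sup>2 + (cnorm b)\<^sup>2"
  by (simp add: cnorm_power2)

lemma cnorm_Pair_zero_left [simp]: "cnorm (0, b) = cnorm b"
  by (simp add: cnorm_def)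

lemma cnorm_Pair_zero_right [simp]: "cnorm (a, 0) = cnorm a"
  by (simp add: cnorm_def)

lemma cnorm_snd_le: "cnorm (snd p) \<le> cnorm p"
  using cnorm_Pair_power2[of "fst p" "snd p"]
  by (simp add: cnorm_le_iff_power2_le)

lemma clipschitz_snd: "clipschitz snd"
  using cnorm_snd_le by (intro clipschitzI[of 1]) (simp_all flip: snd_diff)

lemma bounded_op_dsum_op:
  assumes "bounded_op A" "bounded_op B"
  shows "bounded_op (dsum_op A B)"
proof -
  obtain KA where "0 < KA" and KA: "\<And>x. cnorm (A x) \<le> KA * cnorm x"
    using bounded_op_pos_bound[OF assms(1)] by blast
  obtain KB where KB: "\<And>x. cnorm (B x) \<le> KB * cnorm x"
    using bounded_op_pos_bound[OF assms(2)] by blast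
  have "clinear (dsum_op A B)"
    using assms by (auto simp: bounded_op_def clinear_def dsum_op_def)
  moreover have "cnorm (dsum_op A B (a, b)) \<le> max KA KB * cnorm (a, b)" for a b
  proof -
    have "cnorm (A a) \<le> max KA KB * cnorm a" "cnorm (B b) \<le> max KA KB * cnorm b"
      using KA[of a] KB[of b] cnorm_nonneg[of a] cnorm_nonneg[of b]
      by (meson max.cobounded1 max.cobounded2 mult_right_mono order_trans)+
    then have "(cnorm (A a))\<^sup>2 + (cnorm (B b))\<^sup>2 \<le> (max KA KB * cnorm a)\<^sup>2 + (max KA KB * cnorm b)\<^sup>2"
      by (intro add_mono power_mono) (simp_all add: cnorm_nonneg)
    then have "(cnorm (A a, B b))\<^sup>2 \<le> (max KA KB * cnorm (a, b))\<^sup>2"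
      by (simp add: cnorm_Pair_power2 power_mult_distrib distrib_left)
    moreover have "0 \<le> max KA KB * cnorm (a, b)"
      using \<open>0 < KA\<close> by (simp add: cnorm_nonneg)
    ultimately have "cnorm (A a, B b) \<le> max KA KB * cnorm (a, b)"
      by (rule power2_le_imp_le)
    then show ?thesis
      by (simp add: dsum_op_def)
  qed
  ultimately show ?thesis
    unfolding bounded_op_def by (auto simp: split_paired_all)
qed

definition cclosure :: "'a::complex_inner set \<Rightarrow> 'a set" where
  "cclosure S = {x. \<forall>e>0. \<exists>s\<in>S. cnorm (x - s) < e}"

lemma cclosureD: "x \<in> cclosure S \<Longrightarrow> 0 < e \<Longrightarrow> \<exists>s\<in>S. cnorm (x - s) < e"
  unfolding cclosure_def by blast

lemma cclosure_superset: "S \<subseteq> cclosure S"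
  unfolding cclosure_def by force

lemma cclosure_mono: "S \<subseteq> T \<Longrightarrow> cclosure S \<subseteq> cclosure T"
  unfolding cclosure_def by blast

lemma cseparable_iff_cclosure: "cseparable M \<longleftrightarrow> (\<exists>D. countable D \<and> D \<subseteq> M \<and> M \<subseteq> cclosure D)"
  unfolding cseparable_def cclosure_def by blast

lemma cclosed_cclosure: "cclosed (cclosure S)"
  unfolding cclosed_def
proof (intro allI impI)
  fix X L
  assume X: "(\<forall>n. X n \<in> cclosure S) \<and> (\<lambda>n. cnorm (X n - L)) \<longlonglongrightarrow> 0"
  have "\<exists>s\<in>S. cnorm (L - s) < e" if "0 < e" for e
  proof -
    have "\<forall>\<^sub>F n in sequentially. cnorm (X n - L) < e / 2"
      using X \<open>0 < e\<close> by (intro order_tendstoD(2)) auto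
    then obtain n where n: "cnorm (X n - L) < e / 2"
      by (auto simp: eventually_sequentially)
    obtain s where "s \<in> S" "cnorm (X n - s) < e / 2"
      using X cclosureD[of "X n" S "e / 2"] \<open>0 < e\<close> by auto
    then show ?thesis
      using n cnorm_triangle_diff[of L s "X n"] cnorm_minus_commute[of L "X n"] by force
  qed
  then show "L \<in> cclosure S"
    unfolding cclosure_def by blast
qed

lemma clipschitz_image_cclosure:
  assumes "clipschitz f"
  shows "f ` cclosure S \<subseteq> cclosure (f ` S)"
proof
  obtain K where "0 < K" and K: "\<And>x y. cnorm (f x - f y) \<le> K * cnorm (x - y)"
    using assms unfolding clipschitz_def by blast
  fix y
  assume "y \<in> f ` cclosure S"
  then obtain x where "x \<in> cclosure S" "y = f x"
    by blast
  have "\<exists>t\<in>f ` S. cnorm (f x - t) < e" if "0 < e" for e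
  proof -
    obtain s where "s \<in> S" and s: "cnorm (x - s) < e / K"
      using cclosureD[OF \<open>x \<in> cclosure S\<close>, of "e / K"] \<open>0 < e\<close> \<open>0 < K\<close> by auto
    have "cnorm (f x - f s) < e"
      using K[of x s] mult_strict_left_mono[OF s \<open>0 < K\<close>] \<open>0 < K\<close> by simp
    with \<open>s \<in> S\<close> show ?thesis
      by blast
  qed
  then show "y \<in> cclosure (f ` S)"
    unfolding cclosure_def \<open>y = f x\<close> by blast
qed

lemma clipschitz_image_subset_cclosure:
  "clipschitz f \<Longrightarrow> f ` S \<subseteq> S \<Longrightarrow> f ` cclosure S \<subseteq> cclosure S"
  by (meson clipschitz_image_cclosure cclosure_mono order_trans)

lemma cseparable_clipschitz_image:
  assumes "clipschitz f" "cseparable S"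
  shows "cseparable (f ` S)"
proof -
  obtain D where "countable D" "D \<subseteq> S" "S \<subseteq> cclosure D"
    using assms(2) by (auto simp: cseparable_iff_cclosure)
  then have "f ` S \<subseteq> cclosure (f ` D)"
    using clipschitz_image_cclosure[OF assms(1), of D] by blast
  with \<open>countable D\<close> \<open>D \<subseteq> S\<close> show ?thesis
    unfolding cseparable_iff_cclosure by blast
qed

lemma cclosure_add:
  assumes "\<forall>x\<in>S. \<forall>y\<in>S. x + y \<in> S" "x \<in> cclosure S" "y \<in> cclosure S"
  shows "x + y \<in> cclosure S"
proof -
  have "\<exists>s\<in>S. cnorm (x + y - s) < e" if "0 < e" for e
  proof -
    obtain u v where "u \<in> S" "v \<in> S" "cnorm (x - u) < e / 2" "cnorm (y - v) < e / 2"
      using cclosureD[OF assms(2), of "e / 2"] cclosureD[OF assms(3), of "e / 2"] \<open>0 < e\<close>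
      by auto
    moreover have "cnorm (x + y - (u + v)) \<le> cnorm (x - u) + cnorm (y - v)"
      using cnorm_triangle[of "x - u" "y - v"] by (simp add: algebra_simps)
    ultimately show ?thesis
      using assms(1) by (intro bexI[of _ "u + v"]) auto
  qed
  then show ?thesis
    unfolding cclosure_def by blast
qed

definition gaussian_rats :: "complex set" where
  "gaussian_rats = (\<lambda>(r, s). Complex (of_rat r) (of_rat s)) ` UNIV"

lemma countable_gaussian_rats: "countable gaussian_rats"
  unfolding gaussian_rats_def by simp

lemma gaussian_rats_dense:
  assumes "0 < e"
  shows "\<exists>q\<in>gaussian_rats. cmod (a - q) < e"
proof -
  have "\<exists>r. \<bar>x - of_rat r\<bar> < e / 2" for x
  proof -
    obtain q where "q \<in> \<rat>" "x - e / 2 < q" "q < x"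
      using Rats_dense_in_real[of "x - e / 2" x] assms by auto
    moreover from \<open>q \<in> \<rat>\<close> obtain r where "q = of_rat r"
      by (auto elim: Rats_cases)
    ultimately show ?thesis
      by (intro exI[of _ r]) simp
  qed
  then obtain r s where "\<bar>Re a - of_rat r\<bar> < e / 2" "\<bar>Im a - of_rat s\<bar> < e / 2"
    by meson
  moreover have "cmod (a - Complex (of_rat r) (of_rat s)) \<le> \<bar>Re a - of_rat r\<bar> + \<bar>Im a - of_rat s\<bar>"
    using cmod_le[of "a - Complex (of_rat r) (of_rat s)"] by simp
  ultimately show ?thesis
    unfolding gaussian_rats_def by (intro bexI[of _ "Complex (of_rat r) (of_rat s)"]) auto
qed

lemma cclosure_scaleC:
  assumes "\<forall>q\<in>gaussian_rats. \<forall>x\<in>S. q *\<^sub>C x \<in> S" "x \<in> cclosure S"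
  shows "a *\<^sub>C x \<in> cclosure S"
proof -
  have "\<exists>s\<in>S. cnorm (a *\<^sub>C x - s) < e" if "0 < e" for e
  proof -
    obtain g where "g \<in> S" and g: "cnorm (x - g) < e / (2 * (cmod a + 1))"
      using cclosureD[OF assms(2), of "e / (2 * (cmod a + 1))"] \<open>0 < e\<close>
      by (auto simp: add_nonneg_pos)
    obtain q where "q \<in> gaussian_rats" and q: "cmod (a - q) < e / (2 * (cnorm g + 1))"
      using gaussian_rats_dense[of "e / (2 * (cnorm g + 1))" a] \<open>0 < e\<close> cnorm_nonneg[of g]
      by (auto simp: add_nonneg_pos)
    have "a *\<^sub>C x - q *\<^sub>C g = a *\<^sub>C (x - g) + (a - q) *\<^sub>C g"
      by (simp add: scaleC_diff_left scaleC_diff_right)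
    then have "cnorm (a *\<^sub>C x - q *\<^sub>C g) \<le> cmod a * cnorm (x - g) + cmod (a - q) * cnorm g"
      using cnorm_triangle[of "a *\<^sub>C (x - g)" "(a - q) *\<^sub>C g"] by (simp add: cnorm_scaleC)
    also have "cmod a * cnorm (x - g) \<le> (cmod a + 1) * cnorm (x - g)"
      by (simp add: cnorm_nonneg mult_right_mono)
    also have "\<dots> < e / 2"
    proof -
      have "0 < 2 * (cmod a + 1)"
        by (simp add: add_nonneg_pos)
      then have "cnorm (x - g) * (2 * (cmod a + 1)) < e"
        using g by (simp only: pos_less_divide_eq)
      then show ?thesis
        by (simp add: algebra_simps)
    qed
    also have "cmod (a - q) * cnorm g \<le> cmod (a - q) * (cnorm g + 1)"
      by (simp add: mult_left_mono)
    also have "\<dots> < e / 2"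
      using q cnorm_nonneg[of g] by (simp add: field_simps add_nonneg_pos)
    finally have "cnorm (a *\<^sub>C x - q *\<^sub>C g) < e"
      by simp
    with assms(1) \<open>q \<in> gaussian_rats\<close> \<open>g \<in> S\<close> show ?thesis
      by blast
  qed
  then show ?thesis
    unfolding cclosure_def by blast
qed

definition closure_step :: "('a::complex_inner \<Rightarrow> 'a) set \<Rightarrow> 'a set \<Rightarrow> 'a set" where
  "closure_step F S = S \<union> (\<Union>f\<in>F. f ` S) \<union> (\<lambda>(x, y). x + y) ` (S \<times> S)
      \<union> (\<lambda>(q, x). q *\<^sub>C x) ` (gaussian_rats \<times> S)"

lemma countable_closure_step: "countable F \<Longrightarrow> countable S \<Longrightarrow> countable (closure_step F S)"
  using countable_gaussian_rats unfolding closure_step_def by auto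

lemma closure_step_superset: "S \<subseteq> closure_step F S"
  by (auto simp: closure_step_def)

lemma closure_step_closed:
  assumes "x \<in> S" "y \<in> S"
  shows "f \<in> F \<Longrightarrow> f x \<in> closure_step F S" and "x + y \<in> closure_step F S"
    and "q \<in> gaussian_rats \<Longrightarrow> q *\<^sub>C x \<in> closure_step F S"
  using assms unfolding closure_step_def
  by (auto intro: rev_image_eqI[of "(x, y)"] rev_image_eqI[of "(q, x)"])

lemma countable_closure_under:
  fixes G :: "'a::complex_inner set" and F :: "('a \<Rightarrow> 'a) set"
  assumes "countable G" "countable F"
  obtains C where "countable C" "insert 0 G \<subseteq> C" "\<forall>f\<in>F. f ` C \<subseteq> C"
    "\<forall>x\<in>C. \<forall>y\<in>C. x + y \<in> C" "\<forall>q\<in>gaussian_rats. \<forall>x\<in>C. q *\<^sub>C x \<in> C"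
proof -
  define level where "level n = (closure_step F ^^ n) (insert 0 G)" for n
  define C where "C = (\<Union>n. level n)"
  have level_Suc: "level (Suc n) = closure_step F (level n)" for n
    by (simp add: level_def)
  have level_mono: "level m \<subseteq> level n" if "m \<le> n" for m n
    by (rule lift_Suc_mono_le[OF _ that]) (simp add: level_Suc closure_step_superset)
  have "countable (level n)" for n
    using assms by (induction n) (simp_all add: level_def countable_closure_step)
  then have "countable C"
    by (simp add: C_def)
  have C_closed: "z \<in> C"
    if xy: "x \<in> C" "y \<in> C" and z: "\<And>S. x \<in> S \<Longrightarrow> y \<in> S \<Longrightarrow> z \<in> closure_step F S" for x y z
  proof -
    obtain m n where "x \<in> level m" "y \<in> level n"
      using xy unfolding C_def by blast
    then have "x \<in> level (max m n)" "y \<in> level (max m n)"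
      using level_mono[of m "max m n"] level_mono[of n "max m n"] by auto
    then have "z \<in> level (Suc (max m n))"
      using z by (simp add: level_Suc)
    then show ?thesis
      by (auto simp: C_def)
  qed
  have "insert 0 G \<subseteq> C"
    using level_def[of 0] by (auto simp: C_def)
  moreover have "f x \<in> C" if "f \<in> F" "x \<in> C" for f x
    using C_closed[OF that(2) that(2)] closure_step_closed(1) that(1) by blast
  moreover have "x + y \<in> C" if "x \<in> C" "y \<in> C" for x y
    using C_closed[OF that] closure_step_closed(2) by blast
  moreover have "q *\<^sub>C x \<in> C" if "q \<in> gaussian_rats" "x \<in> C" for q x
    using C_closed[OF that(2) that(2)] closure_step_closed(3) that(1) by blast
  ultimately show thesis
    by (intro that[OF \<open>countable C\<close>]) auto
qed

lemma separable_invariant_closed_csubspace: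
  fixes G :: "'a::complex_inner set" and F :: "('a \<Rightarrow> 'a) set"
  assumes "countable G" "countable F" "\<forall>f\<in>F. clipschitz f"
  obtains N where "closed_csubspace N" "cseparable N" "cclosure G \<subseteq> N" "\<forall>f\<in>F. f ` N \<subseteq> N"
proof -
  obtain C where C: "countable C" "insert 0 G \<subseteq> C" "\<forall>f\<in>F. f ` C \<subseteq> C"
    "\<forall>x\<in>C. \<forall>y\<in>C. x + y \<in> C" "\<forall>q\<in>gaussian_rats. \<forall>x\<in>C. q *\<^sub>C x \<in> C"
    using countable_closure_under[OF assms(1,2)] by blast
  have "0 \<in> cclosure C"
    using C(2) cclosure_superset[of C] by blast
  then have "csubspace (cclosure C)"
    unfolding csubspace_def using cclosure_add[OF C(4)] cclosure_scaleC[OF C(5)] by simp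
  then have "closed_csubspace (cclosure C)"
    by (simp add: closed_csubspace_def cclosed_cclosure)
  moreover have "cseparable (cclosure C)"
    unfolding cseparable_iff_cclosure using C(1) cclosure_superset[of C] by blast
  moreover have "cclosure G \<subseteq> cclosure C"
    using C(2) by (intro cclosure_mono) blast
  moreover have "f ` cclosure C \<subseteq> cclosure C" if "f \<in> F" for f
    using that C(3) assms(3) by (simp add: clipschitz_image_subset_cclosure)
  ultimately show thesis
    using that by blast
qed

lemma csubspace_eq_UNIV_Times:
  fixes N :: "('a::complex_inner \<times> 'b::complex_inner) set"
  assumes "csubspace N" "UNIV \<times> {0} \<subseteq> N"
  shows "N = UNIV \<times> {k. (0, k) \<in> N}"
proof -
  have add: "p \<in> N \<Longrightarrow> q \<in> N \<Longrightarrow> p + q \<in> N" for p q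
    using assms(1) by (simp add: csubspace_def)
  show ?thesis
  proof (intro set_eqI iffI)
    fix p :: "'a \<times> 'b"
    assume "p \<in> N"
    then have "p + (- fst p, 0) \<in> N"
      using add assms(2) by blast
    then show "p \<in> UNIV \<times> {k. (0, k) \<in> N}"
      by (cases p) simp
  next
    fix p :: "'a \<times> 'b"
    assume "p \<in> UNIV \<times> {k. (0, k) \<in> N}"
    then have "(0, snd p) \<in> N"
      by auto
    then have "(fst p, 0) + (0, snd p) \<in> N"
      using add assms(2) by blast
    then show "p \<in> N"
      by simp
  qed
qed

lemma closed_csubspace_UNIV_TimesD:
  fixes M :: "'b::complex_inner set"
  assumes "closed_csubspace (UNIV \<times> M :: ('a::complex_inner \<times> 'b) set)"
  shows "closed_csubspace M"
proof -
  have "cclosed (UNIV \<times> M :: ('a \<times> 'b) set)"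
    using assms by (simp add: closed_csubspace_def)
  note cl = this[unfolded cclosed_def, rule_format]
  have "csubspace M"
    using assms by (simp add: closed_csubspace_def csubspace_def zero_prod_def)
  moreover have "cclosed M"
    unfolding cclosed_def
  proof (intro allI impI)
    fix X L
    assume "(\<forall>n. X n \<in> M) \<and> (\<lambda>n. cnorm (X n - L)) \<longlonglongrightarrow> 0"
    then have "(0 :: 'a, L) \<in> UNIV \<times> M"
      using cl[of "\<lambda>n. (0, X n)" "(0, L)"] by auto
    then show "L \<in> M"
      by simp
  qed
  ultimately show ?thesis
    by (simp add: closed_csubspace_def)
qed

lemma cseparable_UNIV_TimesD: "cseparable (UNIV \<times> M) \<Longrightarrow> cseparable M"
  using cseparable_clipschitz_image[OF clipschitz_snd, of "UNIV \<times> M"] by simp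

lemma dsum_op_image_UNIV_Times: "dsum_op A B ` (UNIV \<times> M) \<subseteq> UNIV \<times> M \<longleftrightarrow> B ` M \<subseteq> M"
  by (auto simp: dsum_op_def)

lemma unitarily_equiv_on_UNIV_restrict:
  assumes "unitarily_equiv_on UNIV A UNIV B"
  obtains W where "clipschitz W" "clipschitz (inv W)"
    "\<And>N. W ` N \<subseteq> N \<Longrightarrow> inv W ` N \<subseteq> N \<Longrightarrow> unitarily_equiv_on N A N B"
proof -
  obtain W where "bij W" and add: "\<And>x y. W (x + y) = W x + W y"
    and scale: "\<And>a x. W (a *\<^sub>C x) = a *\<^sub>C W x" and inner: "\<And>x y. cinner (W x) (W y) = cinner x y"
    and intertwines: "\<And>x. B (W x) = W (A x)"
    using assms unfolding unitarily_equiv_on_def by blast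
  have isometry: "cnorm (W x - W y) = cnorm (x - y)" for x y
    using add[of "x - y" y] inner[of "x - y" "x - y"] by (simp add: cnorm_def)
  have inv_isometry: "cnorm (inv W x - inv W y) = cnorm (x - y)" for x y
    using isometry[of "inv W x" "inv W y"] \<open>bij W\<close> by (simp add: bij_is_surj surj_f_inv_f)
  have "clipschitz W" "clipschitz (inv W)"
    by (intro clipschitzI[of 1]; simp add: isometry inv_isometry)+
  moreover have "unitarily_equiv_on N A N B" if "W ` N \<subseteq> N" "inv W ` N \<subseteq> N" for N
  proof -
    have "x \<in> W ` N" if "x \<in> N" for x
      using \<open>inv W ` N \<subseteq> N\<close> \<open>x \<in> N\<close> surj_f_inv_f[OF bij_is_surj[OF \<open>bij W\<close>], of x]
      by (metis image_eqI image_subset_iff)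
    moreover have "inj_on W N"
      using bij_is_inj[OF \<open>bij W\<close>] by (rule inj_on_subset) simp
    ultimately have "bij_betw W N N"
      using that(1) unfolding bij_betw_def by blast
    then show ?thesis
      unfolding unitarily_equiv_on_def using add scale inner intertwines by blast
  qed
  ultimately show thesis
    using that by blast
qed

lemma clipschitz_Pair_zero: "clipschitz (\<lambda>x. (x, 0))"
  by (intro clipschitzI[of 1]) simp_all

lemma UNIV_Times_zero_subset_cclosure:
  "UNIV \<subseteq> cclosure D \<Longrightarrow> UNIV \<times> {0} \<subseteq> cclosure ((\<lambda>h. (h, 0)) ` D)"
  using clipschitz_image_cclosure[OF clipschitz_Pair_zero, of D] by blast

theorem lemma3p2:
  fixes T1 T3 :: "'h::chilbert \<Rightarrow> 'h"
    and T2 T4 :: "'k::chilbert \<Rightarrow> 'k"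
  assumes "cseparable (UNIV :: 'h set)"
    and "infinite_dimensional TYPE('h)"
    and "bounded_op T1" and "bounded_op T3"
    and "bounded_op T2" and "bounded_op T4"
    and "unitarily_equiv_on (UNIV :: ('h \<times> 'k) set) (dsum_op T1 T2)
                            (UNIV :: ('h \<times> 'k) set) (dsum_op T3 T4)"
  shows "\<exists>M :: 'k set. closed_csubspace M \<and> cseparable M
            \<and> reducing M T2 \<and> reducing M T4
            \<and> unitarily_equiv_on (UNIV \<times> M) (dsum_op T1 T2) (UNIV \<times> M) (dsum_op T3 T4)"
proof -
  obtain W where W: "clipschitz W" "clipschitz (inv W)" and W_restrict:
    "\<And>N. W ` N \<subseteq> N \<Longrightarrow> inv W ` N \<subseteq> N \<Longrightarrow> unitarily_equiv_on N (dsum_op T1 T2) N (dsum_op T3 T4)"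
    using unitarily_equiv_on_UNIV_restrict[OF assms(7)] by blast
  obtain D :: "'h set" where "countable D" "UNIV \<subseteq> cclosure D"
    using assms(1) by (auto simp: cseparable_iff_cclosure)
  define F where "F = {dsum_op T1 T2, dsum_op (adjoint T1) (adjoint T2),
    dsum_op T3 T4, dsum_op (adjoint T3) (adjoint T4), W, inv W}"
  have "\<forall>f\<in>F. clipschitz f"
    using W assms(3-6)
    by (simp add: F_def clipschitz_bounded_op bounded_op_dsum_op bounded_op_adjoint)
  then obtain N where N: "closed_csubspace N" "cseparable N"
    "cclosure ((\<lambda>h. (h, 0 :: 'k)) ` D) \<subseteq> N" "\<forall>f\<in>F. f ` N \<subseteq> N"
    using separable_invariant_closed_csubspace[of "(\<lambda>h. (h, 0)) ` D" F] \<open>countable D\<close>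
    by (auto simp: F_def)
  define M where "M = {k. (0 :: 'h, k) \<in> N}"
  have N_eq: "N = UNIV \<times> M"
    using N(1,3) UNIV_Times_zero_subset_cclosure[OF \<open>UNIV \<subseteq> cclosure D\<close>]
    unfolding M_def by (intro csubspace_eq_UNIV_Times) (auto simp: closed_csubspace_def)
  have "closed_csubspace M" "cseparable M"
    using N(1,2) closed_csubspace_UNIV_TimesD cseparable_UNIV_TimesD by (simp_all add: N_eq)
  moreover have invariant: "\<forall>f\<in>F. f ` (UNIV \<times> M) \<subseteq> UNIV \<times> M"
    using N(4) by (simp add: N_eq)
  then have "reducing M T2" "reducing M T4"
    using \<open>closed_csubspace M\<close> by (simp_all add: reducing_def F_def dsum_op_image_UNIV_Times)
  moreover have "unitarily_equiv_on (UNIV \<times> M) (dsum_op T1 T2) (UNIV \<times> M) (dsum_op T3 T4)"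
    using W_restrict invariant by (simp add: F_def)
  ultimately show ?thesis
    by blast
qed

end
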